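(* For all integers $n,d,k\ge0$, $T(n,\omega^d\cdot k)\le P(n,\omega^d\cdot k)$.
   Context: $[c]=\{1,\dots,c\}$; ordinals are identified with sets of smaller ordinals; $\approx$ is order-equivalence; $\binom{S}{n}$ is the set of $n$-element subsets. $T(n,S)$ is the least $t\in\mathbb{N}$ such that for every $c\ge1$ and every $\mathrm{COL}:\binom{S}{n}\to[c]$ there is $S'\subseteq S$, $S'\approx S$, with $|\mathrm{COL}(\binom{S'}{n})|\le t$ ($\infty$ if none). Every $\beta<\omega^d\cdot k$ is uniquely $\omega^d b+\sum_{j<d}\omega^j a_j$ with $0\le b<k$, $a_j\in\mathbb{N}$. A coloring rule (CR) on $\binom{\omega^d\cdot k}{n}$ is a pair $(\mathcal{Y},\preceq)$ with $\mathcal{Y}:\{1,\dots,n\}\to\{0,\dots,k-1\}$ and $\preceq$ a total preorder on $I=\{(i,j):1\le i\le n,0\le j<d\}$ (with induced equivalence $\equiv$ and strict part $\prec$) such that: (1) if $d\ge1$, $(i,0)\prec(i',0)$ for $i<i'$; if $d=0$, $\mathcal{Y}(i)<\mathcal{Y}(i')$ for $i<i'$; (2) $(i,j)\equiv(i',j)$ for some $j$ implies $\mathcal{Y}(i)=\mathcal{Y}(i')$; (3) $(i,j)\prec(i,j')$ for $j>j'$; (4) $(i,j)\equiv(i',j')$ implies $j=j'$; (5) for $j>0$, $(i,j)\not\equiv(i',j)$ implies $(i,j-1)\not\equiv(i',j-1)$. $P(n,\omega^d\cdot k)$ is the total number of CRs on $\binom{\omega^d\cdot k}{n}$. *)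

theory Defs
  imports Main "HOL-Library.FuncSet" "HOL-Library.Extended_Nat"
begin

text \<open>Ordinals below omega^d * k are represented by their Cantor normal form
  coefficient lists [b, a_(d-1), ..., a_0] of length d+1 with b < k.
  The ordinal order is then the lexicographic order on these equal-length lists.\<close>

definition ord_less :: "nat list \<Rightarrow> nat list \<Rightarrow> bool" where
  "ord_less xs ys \<longleftrightarrow> (xs, ys) \<in> lexord {(a, b). a < b}"

definition omega_times :: "nat \<Rightarrow> nat \<Rightarrow> nat list set" where
  "omega_times d k = {xs. length xs = Suc d \<and> hd xs < k}"

definition order_equiv :: "nat list set \<Rightarrow> nat list set \<Rightarrow> bool" where
  "order_equiv A B \<longleftrightarrow> (\<exists>f. bij_betw f A B \<and>
      (\<forall>x\<in>A. \<forall>y\<in>A. ord_less x y \<longrightarrow> ord_less (f x) (f y)))"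

definition nsubsets :: "'a set \<Rightarrow> nat \<Rightarrow> 'a set set" where
  "nsubsets S n = {A. A \<subseteq> S \<and> finite A \<and> card A = n}"

definition T_prop :: "nat \<Rightarrow> nat list set \<Rightarrow> nat \<Rightarrow> bool" where
  "T_prop n S t \<longleftrightarrow> (\<forall>c::nat. c \<ge> 1 \<longrightarrow> (\<forall>COL :: nat list set \<Rightarrow> nat.
      COL ` nsubsets S n \<subseteq> {1..c} \<longrightarrow>
      (\<exists>S'. S' \<subseteq> S \<and> order_equiv S' S \<and> card (COL ` nsubsets S' n) \<le> t)))"

definition T :: "nat \<Rightarrow> nat list set \<Rightarrow> enat" where
  "T n S = (if \<exists>t. T_prop n S t then enat (LEAST t. T_prop n S t) else \<infinity>)"

definition CR_index :: "nat \<Rightarrow> nat \<Rightarrow> (nat \<times> nat) set" where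
  "CR_index n d = {1..n} \<times> {0..<d}"

definition is_CR :: "nat \<Rightarrow> nat \<Rightarrow> nat \<Rightarrow> (nat \<Rightarrow> nat) \<Rightarrow> ((nat \<times> nat) \<times> (nat \<times> nat)) set \<Rightarrow> bool" where
  "is_CR n d k Y R \<longleftrightarrow>
     (let I = CR_index n d;
          le = (\<lambda>x y. (x, y) \<in> R);
          eq = (\<lambda>x y. (x, y) \<in> R \<and> (y, x) \<in> R);
          lt = (\<lambda>x y. (x, y) \<in> R \<and> (y, x) \<notin> R)
      in Y \<in> {1..n} \<rightarrow>\<^sub>E {0..<k}
       \<and> R \<subseteq> I \<times> I
       \<and> (\<forall>x\<in>I. le x x)
       \<and> (\<forall>x\<in>I. \<forall>y\<in>I. \<forall>z\<in>I. le x y \<longrightarrow> le y z \<longrightarrow> le x z)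
       \<and> (\<forall>x\<in>I. \<forall>y\<in>I. le x y \<or> le y x)
       \<comment> \<open>(1)\<close>
       \<and> (d \<ge> 1 \<longrightarrow> (\<forall>i\<in>{1..n}. \<forall>i'\<in>{1..n}. i < i' \<longrightarrow> lt (i, 0) (i', 0)))
       \<and> (d = 0 \<longrightarrow> (\<forall>i\<in>{1..n}. \<forall>i'\<in>{1..n}. i < i' \<longrightarrow> Y i < Y i'))
       \<comment> \<open>(2)\<close>
       \<and> (\<forall>i\<in>{1..n}. \<forall>i'\<in>{1..n}. \<forall>j\<in>{0..<d}. eq (i, j) (i', j) \<longrightarrow> Y i = Y i')
       \<comment> \<open>(3)\<close>
       \<and> (\<forall>i\<in>{1..n}. \<forall>j\<in>{0..<d}. \<forall>j'\<in>{0..<d}. j > j' \<longrightarrow> lt (i, j) (i, j'))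
       \<comment> \<open>(4)\<close>
       \<and> (\<forall>i\<in>{1..n}. \<forall>i'\<in>{1..n}. \<forall>j\<in>{0..<d}. \<forall>j'\<in>{0..<d}. eq (i, j) (i', j') \<longrightarrow> j = j')
       \<comment> \<open>(5)\<close>
       \<and> (\<forall>i\<in>{1..n}. \<forall>i'\<in>{1..n}. \<forall>j\<in>{0..<d}. j > 0 \<longrightarrow>
             \<not> eq (i, j) (i', j) \<longrightarrow> \<not> eq (i, j - 1) (i', j - 1)))"

definition P :: "nat \<Rightarrow> nat \<Rightarrow> nat \<Rightarrow> nat" where
  "P n d k = card {(Y, R). is_CR n d k Y R}"

end

(*
  Given an infinite H \<subseteq> \<nat>, replace every non-leading coefficient of an ordinal
  [b, a_(d-1), ..., a_0] < \<omega>^d * k by the element of H whose position in H encodes the whole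
  prefix of coefficients up to it. This is an order embedding of \<omega>^d * k into itself, and in
  its image each non-leading coefficient determines the prefix before it. Hence an n-subset
  of the image is determined by its coloring rule (the leading coefficients together with the
  order pattern of all other coefficients) and by the set of those other coefficients, a subset
  of H whose size depends only on the rule. Applying Ramsey's theorem to the finitely many
  induced colourings of finite subsets of \<nat> yields an H on which the colour of every such
  n-subset depends on its coloring rule alone, so at most P(n, \<omega>^d * k) colours remain.
*)

theory Submission
  imports Defs "HOL-Library.Ramsey" "HOL-Library.List_Lexorder" "HOL-Library.Nat_Bijection"
begin

section \<open>Coding, order patterns and Ramsey's theorem\<close>

lemma prod_encode_strict_mono_left:
  assumes "a < b"
  shows "prod_encode (a, m) < prod_encode (b, m)"
proof -
  have "(a + m) * Suc (a + m) \<le> (b + m) * Suc (b + m)"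
    using assms by (intro mult_le_mono) auto
  then have "triangle (a + m) \<le> triangle (b + m)"
    unfolding triangle_def by (rule div_le_mono)
  with assms show ?thesis
    by (simp add: prod_encode_def)
qed

lemma list_encode_rev_take_less:
  "m < m' \<Longrightarrow> m' \<le> length xs \<Longrightarrow> list_encode (rev (take m xs)) < list_encode (rev (take m' xs))"
proof (induction m')
  case 0
  then show ?case by simp
next
  case (Suc m')
  have "list_encode (rev (take m' xs)) < list_encode (rev (take (Suc m') xs))"
    using Suc.prems by (simp add: take_Suc_conv_app_nth le_imp_less_Suc le_prod_encode_2)
  with Suc show ?case by (cases "m = m'") auto
qed

lemma le_if_same_image_and_order:
  fixes f g :: "'a \<Rightarrow> 'b::wellorder"
  assumes img: "f ` I = g ` I" and ord: "\<forall>p\<in>I. \<forall>q\<in>I. f p \<le> f q \<longleftrightarrow> g p \<le> g q"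
    and "p \<in> I"
  shows "g p \<le> f p"
  using \<open>p \<in> I\<close>
proof (induction "f p" arbitrary: p rule: less_induct)
  case less
  show ?case
  proof (rule ccontr)
    assume "\<not> g p \<le> f p"
    then have "f p < g p" by simp
    moreover obtain q where q: "q \<in> I" "f p = g q"
      using img less.prems by (metis image_eqI imageE)
    ultimately have "f q < f p"
      using ord less.prems by (metis not_le)
    then have "g q \<le> f q" using less q by blast
    with \<open>f q < f p\<close> q show False by simp
  qed
qed

lemma eq_on_if_same_image_and_order:
  fixes f g :: "'a \<Rightarrow> 'b::wellorder"
  assumes "f ` I = g ` I" and "\<forall>p\<in>I. \<forall>q\<in>I. f p \<le> f q \<longleftrightarrow> g p \<le> g q" and "p \<in> I"
  shows "f p = g p"
  using le_if_same_image_and_order[of f I g] le_if_same_image_and_order[of g I f] assms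
  by (metis antisym)

lemma card_image_eq_if_same_kernel:
  assumes "\<forall>p\<in>I. \<forall>q\<in>I. f p = f q \<longleftrightarrow> g p = g q"
  shows "card (f ` I) = card (g ` I)"
proof -
  let ?fg = "(\<lambda>p. (f p, g p)) ` I"
  have "inj_on fst ?fg" "inj_on snd ?fg"
    using assms by (auto simp: inj_on_def)
  then have "card (fst ` ?fg) = card (snd ` ?fg)"
    by (simp add: card_image)
  then show ?thesis by (simp add: image_image)
qed

lemma Ramsey_finite_family:
  fixes f :: "'q \<Rightarrow> 'a set \<Rightarrow> nat" and r :: "'q \<Rightarrow> nat"
  assumes "finite F" and "infinite Z"
    and "\<forall>q\<in>F. \<forall>X. X \<subseteq> Z \<and> finite X \<and> card X = r q \<longrightarrow> f q X < s"
  shows "\<exists>H\<subseteq>Z. infinite H \<and> (\<forall>q\<in>F. \<exists>t. \<forall>X. X \<subseteq> H \<and> finite X \<and> card X = r q \<longrightarrow> f q X = t)"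
  using assms
proof (induction F rule: finite_induct)
  case empty
  then show ?case by auto
next
  case (insert q F)
  then obtain H where H: "H \<subseteq> Z" "infinite H"
    "\<forall>q\<in>F. \<exists>t. \<forall>X. X \<subseteq> H \<and> finite X \<and> card X = r q \<longrightarrow> f q X = t"
    by auto
  moreover obtain H' t where "H' \<subseteq> H" "infinite H'"
    "\<forall>X. X \<subseteq> H' \<and> finite X \<and> card X = r q \<longrightarrow> f q X = t"
    using Ramsey[OF H(2), of "r q" "f q" s] insert.prems H(1) by blast
  ultimately show ?case
    by (intro exI[of _ H']) (auto; meson subset_trans)
qed

lemma Ramsey_signature:
  fixes sig :: "'b \<Rightarrow> 'c" and supp :: "'b \<Rightarrow> 'a set" and col :: "'b \<Rightarrow> nat"
  assumes "finite F" and "infinite Z" and sig: "sig ` \<B> \<subseteq> F"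
    and finite_supp: "\<forall>B\<in>\<B>. finite (supp B)"
    and inj: "inj_on (\<lambda>B. (sig B, supp B)) \<B>"
    and card: "\<forall>B\<in>\<B>. \<forall>B'\<in>\<B>. sig B = sig B' \<longrightarrow> card (supp B) = card (supp B')"
    and col_bound: "\<forall>B\<in>\<B>. col B < s"
  obtains H \<phi> where "H \<subseteq> Z" "infinite H" "\<forall>B\<in>\<B>. supp B \<subseteq> H \<longrightarrow> col B = \<phi> (sig B)"
proof -
  define r where "r \<tau> = card (supp (SOME B. B \<in> \<B> \<and> sig B = \<tau>))" for \<tau>
  have r: "card (supp B) = r (sig B)" if "B \<in> \<B>" for B
    unfolding r_def using card that by (metis (mono_tags, lifting) someI)
  define G where "G \<tau> X = (if \<exists>B\<in>\<B>. sig B = \<tau> \<and> supp B = X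
    then col (THE B. B \<in> \<B> \<and> sig B = \<tau> \<and> supp B = X) else 0)" for \<tau> X
  have G: "G (sig B) (supp B) = col B" if "B \<in> \<B>" for B
  proof -
    have "(THE B'. B' \<in> \<B> \<and> sig B' = sig B \<and> supp B' = supp B) = B"
      using inj that by (auto simp: inj_on_def)
    then show ?thesis using that by (auto simp: G_def)
  qed
  have "G \<tau> X < Suc s" for \<tau> X
  proof (cases "\<exists>B\<in>\<B>. sig B = \<tau> \<and> supp B = X")
    case True
    then obtain B where "B \<in> \<B>" "G \<tau> X = col B" using G by blast
    then show ?thesis using col_bound by (auto intro: less_SucI)
  qed (auto simp: G_def)
  then obtain H where H: "H \<subseteq> Z" "infinite H"
    "\<forall>\<tau>\<in>F. \<exists>t. \<forall>X. X \<subseteq> H \<and> finite X \<and> card X = r \<tau> \<longrightarrow> G \<tau> X = t"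
    using Ramsey_finite_family[OF assms(1,2), of r G "Suc s"] by blast
  then obtain \<phi> where "\<forall>\<tau>\<in>F. \<forall>X. X \<subseteq> H \<and> finite X \<and> card X = r \<tau> \<longrightarrow> G \<tau> X = \<phi> \<tau>"
    by metis
  then have "\<forall>B\<in>\<B>. supp B \<subseteq> H \<longrightarrow> col B = \<phi> (sig B)"
    using G r finite_supp sig by (metis image_subset_iff)
  with H that show ?thesis by blast
qed

section \<open>An order embedding of \<omega>^d * k into itself\<close>

lemma ord_less_iff_less: "ord_less xs ys \<longleftrightarrow> xs < ys"
  by (simp add: ord_less_def list_less_def)

lemma less_list_same_length_iff:
  "length xs = length ys \<Longrightarrow> xs < ys \<longleftrightarrow> (\<exists>t<length xs. take t xs = take t ys \<and> xs ! t < ys ! t)"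
  by (simp add: list_less_def lexord_take_index_conv)

lemma omega_times_iff: "x \<in> omega_times d k \<longleftrightarrow> length x = Suc d \<and> x ! 0 < k"
  unfolding omega_times_def by (cases x) auto

lemma order_equiv_image:
  fixes f :: "nat list \<Rightarrow> nat list"
  assumes "strict_mono_on A f"
  shows "order_equiv (f ` A) A"
proof -
  have "inj_on f A"
    using assms by (rule strict_mono_on_imp_inj_on)
  then have "bij_betw (inv_into A f) (f ` A) A"
    by (simp add: bij_betw_imageI bij_betw_inv_into)
  moreover have "ord_less (inv_into A f u) (inv_into A f v)"
    if "u \<in> f ` A" "v \<in> f ` A" "ord_less u v" for u v
    using that strict_mono_on_less[OF assms] \<open>inj_on f A\<close> by (auto simp: ord_less_iff_less)
  ultimately show ?thesis
    unfolding order_equiv_def by blast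
qed

text \<open>Reversal makes the code of a prefix strictly monotone in its last entry.\<close>

definition prefix_emb :: "nat set \<Rightarrow> nat list \<Rightarrow> nat list" where
  "prefix_emb H x = map (\<lambda>t. if t = 0 then x ! 0 else enumerate H (list_encode (rev (take (Suc t) x))))
     [0..<length x]"

lemma length_prefix_emb [simp]: "length (prefix_emb H x) = length x"
  by (simp add: prefix_emb_def)

lemma nth_prefix_emb:
  "t < length x \<Longrightarrow>
     prefix_emb H x ! t = (if t = 0 then x ! 0 else enumerate H (list_encode (rev (take (Suc t) x))))"
  by (simp add: prefix_emb_def del: upt_Suc)

lemma take_prefix_emb: "take m (prefix_emb H x) = prefix_emb H (take m x)"
  by (rule nth_equalityI) (simp_all add: nth_prefix_emb)

lemma prefix_emb_in_omega_times: "x \<in> omega_times d k \<Longrightarrow> prefix_emb H x \<in> omega_times d k"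
  by (simp add: omega_times_iff nth_prefix_emb)

lemma prefix_emb_nth_in: "infinite H \<Longrightarrow> 0 < t \<Longrightarrow> t < length x \<Longrightarrow> prefix_emb H x ! t \<in> H"
  by (simp add: nth_prefix_emb enumerate_in_set)

lemma prefix_emb_nth_less:
  "infinite H \<Longrightarrow> 0 < t \<Longrightarrow> t < t' \<Longrightarrow> t' < length x \<Longrightarrow> prefix_emb H x ! t < prefix_emb H x ! t'"
  by (simp add: nth_prefix_emb list_encode_rev_take_less)

lemma prefix_emb_nth_eq:
  assumes "infinite H" "0 < t" "t < length x" "0 < t'" "t' < length y"
    and "prefix_emb H x ! t = prefix_emb H y ! t'"
  shows "t = t' \<and> take (Suc t) (prefix_emb H x) = take (Suc t) (prefix_emb H y)"
proof -
  have "take (Suc t) x = take (Suc t') y"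
    using assms by (simp add: nth_prefix_emb inj_enumerate inj_eq list_encode_eq)
  moreover from this have "t = t'"
    using assms by (metis length_take min.absorb2 Suc_leI Suc_inject)
  ultimately show ?thesis
    by (simp add: take_prefix_emb)
qed

lemma prefix_emb_less:
  assumes "infinite H" "length x = length y" "x < y"
  shows "prefix_emb H x < prefix_emb H y"
proof -
  obtain t where t: "t < length x" "take t x = take t y" "x ! t < y ! t"
    using assms less_list_same_length_iff by blast
  have "take t (prefix_emb H x) = take t (prefix_emb H y)"
    using t by (simp add: take_prefix_emb)
  moreover have "prefix_emb H x ! t < prefix_emb H y ! t"
  proof (cases "t = 0")
    case False
    have "take (Suc t) x = take t x @ [x ! t]" "take (Suc t) y = take t x @ [y ! t]"
      using t assms(2) by (simp_all add: take_Suc_conv_app_nth)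
    with t False assms show ?thesis
      by (simp add: nth_prefix_emb prod_encode_strict_mono_left)
  qed (use t assms in \<open>simp add: nth_prefix_emb\<close>)
  ultimately show ?thesis
    using t assms(2) less_list_same_length_iff[of "prefix_emb H x" "prefix_emb H y"] by auto
qed

lemma order_equiv_prefix_emb:
  "infinite H \<Longrightarrow> order_equiv (prefix_emb H ` omega_times d k) (omega_times d k)"
  by (intro order_equiv_image strict_mono_onI) (simp add: omega_times_iff prefix_emb_less)

definition prefix_coded :: "nat \<Rightarrow> nat list set \<Rightarrow> bool" where
  "prefix_coded d U \<longleftrightarrow>
     (\<forall>u\<in>U. \<forall>v\<in>U. \<forall>t\<in>{1..d}. \<forall>t'\<in>{1..d}.
        u ! t = v ! t' \<longrightarrow> t = t' \<and> take (Suc t) u = take (Suc t) v) \<and>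
     (\<forall>u\<in>U. \<forall>t\<in>{1..d}. \<forall>t'\<in>{1..d}. t < t' \<longrightarrow> u ! t < u ! t')"

lemma prefix_coded_prefix_emb:
  assumes "infinite H"
  shows "prefix_coded d (prefix_emb H ` omega_times d k)"
  unfolding prefix_coded_def
proof (intro conjI; intro ballI impI)
  fix u v t t'
  assume "u \<in> prefix_emb H ` omega_times d k" "v \<in> prefix_emb H ` omega_times d k"
    and t: "t \<in> {1..d}" "t' \<in> {1..d}" and "u ! t = v ! t'"
  then obtain x y where "x \<in> omega_times d k" "y \<in> omega_times d k" "u = prefix_emb H x" "v = prefix_emb H y"
    by blast
  with t \<open>u ! t = v ! t'\<close> show "t = t' \<and> take (Suc t) u = take (Suc t) v"
    using prefix_emb_nth_eq[OF assms, of t x t' y] by (auto simp: omega_times_iff)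
next
  fix u t t'
  assume "u \<in> prefix_emb H ` omega_times d k" "t \<in> {1..d}" "t' \<in> {1..d}" "t < t'"
  then show "u ! t < u ! t'"
    using prefix_emb_nth_less[OF assms] by (auto simp: omega_times_iff)
qed

lemma prefix_coded_nth_eqD:
  "prefix_coded d U \<Longrightarrow> u \<in> U \<Longrightarrow> v \<in> U \<Longrightarrow> t \<in> {1..d} \<Longrightarrow> t' \<in> {1..d} \<Longrightarrow>
    u ! t = v ! t' \<Longrightarrow> t = t' \<and> take (Suc t) u = take (Suc t) v"
  unfolding prefix_coded_def by blast

lemma prefix_coded_nth_lessD:
  "prefix_coded d U \<Longrightarrow> u \<in> U \<Longrightarrow> t \<in> {1..d} \<Longrightarrow> t' \<in> {1..d} \<Longrightarrow> t < t' \<Longrightarrow> u ! t < u ! t'"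
  unfolding prefix_coded_def by blast

lemma inj_on_last_if_prefix_coded:
  assumes "U \<subseteq> omega_times d k" "prefix_coded d U"
  shows "inj_on last U"
proof (rule inj_onI)
  fix u v assume uv: "u \<in> U" "v \<in> U" "last u = last v"
  then have len: "length u = Suc d" "length v = Suc d"
    using assms(1) by (auto simp: omega_times_iff)
  then have "u ! d = v ! d"
    using uv by (metis last_conv_nth diff_Suc_1 list.size(3) nat.distinct(1))
  show "u = v"
  proof (cases "d = 0")
    case True
    with len \<open>u ! d = v ! d\<close> show ?thesis
      by (intro nth_equalityI) auto
  next
    case False
    then have "take (Suc d) u = take (Suc d) v"
      using prefix_coded_nth_eqD[OF assms(2) uv(1,2), of d d] \<open>u ! d = v ! d\<close> by simp
    with len show ?thesis by simp
  qed
qed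

section \<open>The coloring rule of an n-subset\<close>

text \<open>Points are numbered from 1, as in \<^const>\<open>CR_index\<close>, in increasing order of their
  \<omega>^0 coefficient (the last entry).\<close>

definition ith_by_last :: "nat list set \<Rightarrow> nat \<Rightarrow> nat list" where
  "ith_by_last A i = the_inv_into A last (sorted_list_of_set (last ` A) ! (i - 1))"

context
  fixes A :: "nat list set" and n :: nat
  assumes fin: "finite A" and card: "card A = n" and inj: "inj_on last A"
begin

private lemma length_sorted_lasts: "length (sorted_list_of_set (last ` A)) = n"
  using fin card inj by (simp add: card_image)

private lemma sorted_last_in: "i \<in> {1..n} \<Longrightarrow> sorted_list_of_set (last ` A) ! (i - 1) \<in> last ` A"
  using fin length_sorted_lasts nth_mem[of "i - 1" "sorted_list_of_set (last ` A)"] by auto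

lemma ith_by_last_in: "i \<in> {1..n} \<Longrightarrow> ith_by_last A i \<in> A"
  unfolding ith_by_last_def using inj sorted_last_in by (rule the_inv_into_into) simp_all

lemma last_ith_by_last: "i \<in> {1..n} \<Longrightarrow> last (ith_by_last A i) = sorted_list_of_set (last ` A) ! (i - 1)"
  unfolding ith_by_last_def using inj sorted_last_in by (rule f_the_inv_into_f)

lemma image_ith_by_last: "ith_by_last A ` {1..n} = A"
proof -
  let ?xs = "sorted_list_of_set (last ` A)"
  have "(\<lambda>i. ?xs ! (i - 1)) ` {1..n} = set ?xs"
  proof (intro equalityI subsetI)
    fix x assume "x \<in> (\<lambda>i. ?xs ! (i - 1)) ` {1..n}"
    then show "x \<in> set ?xs"
      using length_sorted_lasts by auto
  next
    fix x assume "x \<in> set ?xs"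
    then obtain t where "t < n" "x = ?xs ! t"
      by (metis in_set_conv_nth length_sorted_lasts)
    then show "x \<in> (\<lambda>i. ?xs ! (i - 1)) ` {1..n}"
      by (intro image_eqI[of _ _ "Suc t"]) auto
  qed
  then have "ith_by_last A ` {1..n} = the_inv_into A last ` last ` A"
    using fin unfolding ith_by_last_def by (metis image_image set_sorted_list_of_set finite_imageI)
  then show ?thesis
    using inj by simp
qed

lemma last_ith_by_last_less:
  "i \<in> {1..n} \<Longrightarrow> i' \<in> {1..n} \<Longrightarrow> i < i' \<Longrightarrow> last (ith_by_last A i) < last (ith_by_last A i')"
  using length_sorted_lasts strict_sorted_list_of_set[of "last ` A"]
  by (auto simp: last_ith_by_last sorted_wrt_iff_nth_less)

end

text \<open>The coefficient of \<omega>^j of the i-th point; a Cantor normal form list of length d + 1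
  stores it at position d - j.\<close>

definition coeff :: "nat \<Rightarrow> nat list set \<Rightarrow> nat \<times> nat \<Rightarrow> nat" where
  "coeff d A = (\<lambda>(i, j). ith_by_last A i ! (d - j))"

text \<open>For A with distinct \<omega>^0 coefficients, \<^term>\<open>(rule_Y n A, rule_R n d A)\<close> is the
  coloring rule realised by A.\<close>

definition rule_Y :: "nat \<Rightarrow> nat list set \<Rightarrow> nat \<Rightarrow> nat" where
  "rule_Y n A = restrict (\<lambda>i. ith_by_last A i ! 0) {1..n}"

definition rule_R :: "nat \<Rightarrow> nat \<Rightarrow> nat list set \<Rightarrow> ((nat \<times> nat) \<times> (nat \<times> nat)) set" where
  "rule_R n d A = {(p, q). p \<in> CR_index n d \<and> q \<in> CR_index n d \<and> coeff d A p \<le> coeff d A q}"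

definition coeff_set :: "nat \<Rightarrow> nat \<Rightarrow> nat list set \<Rightarrow> nat set" where
  "coeff_set n d A = coeff d A ` CR_index n d"

definition distinct_last_nsubsets :: "nat \<Rightarrow> nat \<Rightarrow> nat \<Rightarrow> nat list set set" where
  "distinct_last_nsubsets n d k = {A \<in> nsubsets (omega_times d k) n. inj_on last A}"

lemma CR_index_iff: "(i, j) \<in> CR_index n d \<longleftrightarrow> i \<in> {1..n} \<and> j < d"
  by (auto simp: CR_index_def)

lemma rule_R_iff:
  "(p, q) \<in> rule_R n d A \<longleftrightarrow> p \<in> CR_index n d \<and> q \<in> CR_index n d \<and> coeff d A p \<le> coeff d A q"
  by (simp add: rule_R_def)

lemma rule_R_equiv_iff:
  "(p, q) \<in> rule_R n d A \<and> (q, p) \<in> rule_R n d A \<longleftrightarrow>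
    p \<in> CR_index n d \<and> q \<in> CR_index n d \<and> coeff d A p = coeff d A q"
  by (auto simp: rule_R_iff)

lemma ith_by_last_nsubsetD:
  assumes "A \<in> distinct_last_nsubsets n d k" "i \<in> {1..n}"
  shows "ith_by_last A i \<in> A" "length (ith_by_last A i) = Suc d" "ith_by_last A i ! 0 < k"
proof -
  show "ith_by_last A i \<in> A"
    using assms by (intro ith_by_last_in) (auto simp: distinct_last_nsubsets_def nsubsets_def)
  then show "length (ith_by_last A i) = Suc d" "ith_by_last A i ! 0 < k"
    using assms(1) by (auto simp: distinct_last_nsubsets_def nsubsets_def omega_times_iff)
qed

lemma image_ith_by_last_nsubset: "A \<in> distinct_last_nsubsets n d k \<Longrightarrow> ith_by_last A ` {1..n} = A"
  by (intro image_ith_by_last) (auto simp: distinct_last_nsubsets_def nsubsets_def)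

lemma rule_Y_in_PiE: "A \<in> distinct_last_nsubsets n d k \<Longrightarrow> rule_Y n A \<in> {1..n} \<rightarrow>\<^sub>E {0..<k}"
  using ith_by_last_nsubsetD(3) by (auto simp: rule_Y_def)

lemma eq_if_same_rule_and_coeff_set:
  assumes A: "A \<in> distinct_last_nsubsets n d k" and B: "B \<in> distinct_last_nsubsets n d k"
    and "rule_Y n A = rule_Y n B" "rule_R n d A = rule_R n d B" "coeff_set n d A = coeff_set n d B"
  shows "A = B"
proof -
  have coeff_eq: "coeff d A p = coeff d B p" if "p \<in> CR_index n d" for p
  proof (rule eq_on_if_same_image_and_order[OF _ _ that])
    show "coeff d A ` CR_index n d = coeff d B ` CR_index n d"
      using assms(5) by (simp add: coeff_set_def)
    show "\<forall>p\<in>CR_index n d. \<forall>q\<in>CR_index n d. coeff d A p \<le> coeff d A q \<longleftrightarrow> coeff d B p \<le> coeff d B q"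
      using assms(4) by (metis rule_R_iff)
  qed
  have "ith_by_last A i = ith_by_last B i" if i: "i \<in> {1..n}" for i
  proof (rule nth_equalityI)
    show "length (ith_by_last A i) = length (ith_by_last B i)"
      using ith_by_last_nsubsetD(2)[OF A i] ith_by_last_nsubsetD(2)[OF B i] by simp
    fix t assume "t < length (ith_by_last A i)"
    then have "t \<le> d"
      using ith_by_last_nsubsetD(2)[OF A i] by simp
    show "ith_by_last A i ! t = ith_by_last B i ! t"
    proof (cases "t = 0")
      case True
      then show ?thesis
        using assms(3) i by (metis rule_Y_def restrict_apply')
    next
      case False
      then have "coeff d A (i, d - t) = coeff d B (i, d - t)"
        using coeff_eq i \<open>t \<le> d\<close> by (simp add: CR_index_iff)
      then show ?thesis
        using \<open>t \<le> d\<close> by (simp add: coeff_def)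
    qed
  qed
  then show ?thesis
    using image_ith_by_last_nsubset[OF A] image_ith_by_last_nsubset[OF B] by (metis image_cong)
qed

lemma card_coeff_set_eq:
  assumes "rule_R n d A = rule_R n d B"
  shows "card (coeff_set n d A) = card (coeff_set n d B)"
  unfolding coeff_set_def
proof (rule card_image_eq_if_same_kernel, intro ballI)
  fix p q assume "p \<in> CR_index n d" "q \<in> CR_index n d"
  then show "coeff d A p = coeff d A q \<longleftrightarrow> coeff d B p = coeff d B q"
    using rule_R_equiv_iff[of p q n d A] rule_R_equiv_iff[of p q n d B] assms by simp
qed

context
  fixes n d k :: nat and U B :: "nat list set"
  assumes U: "U \<subseteq> omega_times d k" "prefix_coded d U" and B: "B \<in> nsubsets U n"
begin

lemma distinct_last_nsubsets_if_prefix_coded: "B \<in> distinct_last_nsubsets n d k"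
  using B U inj_on_last_if_prefix_coded[OF U] inj_on_subset
  by (auto simp: distinct_last_nsubsets_def nsubsets_def)

private lemma ith_in_U: "i \<in> {1..n} \<Longrightarrow> ith_by_last B i \<in> U"
  using ith_by_last_nsubsetD(1)[OF distinct_last_nsubsets_if_prefix_coded] B by (auto simp: nsubsets_def)

lemma coeff_eqD:
  assumes "(i, j) \<in> CR_index n d" "(i', j') \<in> CR_index n d" "coeff d B (i, j) = coeff d B (i', j')"
  shows "j = j' \<and> take (Suc (d - j)) (ith_by_last B i) = take (Suc (d - j)) (ith_by_last B i')"
proof -
  have "d - j = d - j' \<and> take (Suc (d - j)) (ith_by_last B i) = take (Suc (d - j)) (ith_by_last B i')"
    using assms prefix_coded_nth_eqD[OF U(2) ith_in_U ith_in_U, of i i' "d - j" "d - j'"]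
    by (auto simp: CR_index_iff coeff_def)
  moreover have "j = j'"
    using calculation assms(1,2) by (simp add: CR_index_iff) arith
  ultimately show ?thesis
    by simp
qed

lemma coeff_eq_iff:
  assumes "(i, j) \<in> CR_index n d" "(i', j) \<in> CR_index n d"
  shows "coeff d B (i, j) = coeff d B (i', j) \<longleftrightarrow>
    take (Suc (d - j)) (ith_by_last B i) = take (Suc (d - j)) (ith_by_last B i')"
  using coeff_eqD[OF assms] by (auto simp: coeff_def dest: arg_cong[where f = "\<lambda>xs. xs ! (d - j)"])

lemma coeff_eq_imp_lead_eq:
  assumes "(i, j) \<in> CR_index n d" "(i', j) \<in> CR_index n d" "coeff d B (i, j) = coeff d B (i', j)"
  shows "ith_by_last B i ! 0 = ith_by_last B i' ! 0"
  using assms coeff_eq_iff by (metis nth_take zero_less_Suc)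

lemma coeff_eq_mono:
  assumes "(i, j) \<in> CR_index n d" "(i', j') \<in> CR_index n d" "j \<le> j'"
    and "coeff d B (i, j) = coeff d B (i', j)"
  shows "coeff d B (i, j') = coeff d B (i', j')"
proof -
  have "take (Suc (d - j)) (ith_by_last B i) = take (Suc (d - j)) (ith_by_last B i')"
    using assms coeff_eq_iff by (simp add: CR_index_iff)
  then have "take (Suc (d - j')) (ith_by_last B i) = take (Suc (d - j')) (ith_by_last B i')"
    using \<open>j \<le> j'\<close> by (metis take_take min.absorb1 Suc_le_mono diff_le_mono2)
  with assms show ?thesis
    using coeff_eq_iff by (simp add: CR_index_iff)
qed

lemma coeff_less: "i \<in> {1..n} \<Longrightarrow> j' < j \<Longrightarrow> j < d \<Longrightarrow> coeff d B (i, j) < coeff d B (i, j')"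
  using prefix_coded_nth_lessD[OF U(2) ith_in_U, of i "d - j" "d - j'"] by (simp add: coeff_def)

lemma ith_by_last_nth_less:
  assumes "i \<in> {1..n}" "i' \<in> {1..n}" "i < i'"
  shows "ith_by_last B i ! d < ith_by_last B i' ! d"
proof -
  have "last (ith_by_last B i) = ith_by_last B i ! d" if "i \<in> {1..n}" for i
    using ith_by_last_nsubsetD(2)[OF distinct_last_nsubsets_if_prefix_coded that]
    by (metis last_conv_nth diff_Suc_1 list.size(3) nat.distinct(1))
  then show ?thesis
    using assms last_ith_by_last_less[of B n i i'] distinct_last_nsubsets_if_prefix_coded
    by (auto simp: distinct_last_nsubsets_def nsubsets_def)
qed

lemma is_CR_rule: "is_CR n d k (rule_Y n B) (rule_R n d B)"
  unfolding is_CR_def Let_def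
proof (intro conjI)
  show "rule_Y n B \<in> {1..n} \<rightarrow>\<^sub>E {0..<k}"
    using distinct_last_nsubsets_if_prefix_coded by (rule rule_Y_in_PiE)
  show "1 \<le> d \<longrightarrow> (\<forall>i\<in>{1..n}. \<forall>i'\<in>{1..n}. i < i' \<longrightarrow>
      ((i, 0), (i', 0)) \<in> rule_R n d B \<and> ((i', 0), (i, 0)) \<notin> rule_R n d B)"
  proof (intro impI ballI)
    fix i i' assume "1 \<le> d" "i \<in> {1..n}" "i' \<in> {1..n}" "i < i'"
    moreover from this have "coeff d B (i, 0) < coeff d B (i', 0)"
      using ith_by_last_nth_less by (simp add: coeff_def)
    ultimately show "((i, 0), (i', 0)) \<in> rule_R n d B \<and> ((i', 0), (i, 0)) \<notin> rule_R n d B"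
      by (auto simp: rule_R_iff CR_index_iff)
  qed
  show "d = 0 \<longrightarrow> (\<forall>i\<in>{1..n}. \<forall>i'\<in>{1..n}. i < i' \<longrightarrow> rule_Y n B i < rule_Y n B i')"
    using ith_by_last_nth_less by (auto simp: rule_Y_def)
  show "\<forall>i\<in>{1..n}. \<forall>j\<in>{0..<d}. \<forall>j'\<in>{0..<d}. j' < j \<longrightarrow>
      ((i, j), (i, j')) \<in> rule_R n d B \<and> ((i, j'), (i, j)) \<notin> rule_R n d B"
    using coeff_less by (fastforce simp: rule_R_iff CR_index_iff)
  show "\<forall>i\<in>{1..n}. \<forall>i'\<in>{1..n}. \<forall>j\<in>{0..<d}. 0 < j \<longrightarrow>
      \<not> (((i, j), (i', j)) \<in> rule_R n d B \<and> ((i', j), (i, j)) \<in> rule_R n d B) \<longrightarrow>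
      \<not> (((i, j - 1), (i', j - 1)) \<in> rule_R n d B \<and> ((i', j - 1), (i, j - 1)) \<in> rule_R n d B)"
  proof (intro ballI impI notI)
    fix i i' j assume ij: "i \<in> {1..n}" "i' \<in> {1..n}" "j \<in> {0..<d}" "0 < j"
      and "((i, j - 1), (i', j - 1)) \<in> rule_R n d B \<and> ((i', j - 1), (i, j - 1)) \<in> rule_R n d B"
      and ne: "\<not> (((i, j), (i', j)) \<in> rule_R n d B \<and> ((i', j), (i, j)) \<in> rule_R n d B)"
    then have "coeff d B (i, j) = coeff d B (i', j)"
      using coeff_eq_mono[of i "j - 1" i' j] by (simp add: rule_R_equiv_iff CR_index_iff)
    with ij ne show False
      by (simp add: rule_R_equiv_iff CR_index_iff)
  qed
  show "\<forall>i\<in>{1..n}. \<forall>i'\<in>{1..n}. \<forall>j\<in>{0..<d}.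
      ((i, j), (i', j)) \<in> rule_R n d B \<and> ((i', j), (i, j)) \<in> rule_R n d B \<longrightarrow> rule_Y n B i = rule_Y n B i'"
  proof (intro ballI impI)
    fix i i' j assume "i \<in> {1..n}" "i' \<in> {1..n}" "j \<in> {0..<d}"
      and "((i, j), (i', j)) \<in> rule_R n d B \<and> ((i', j), (i, j)) \<in> rule_R n d B"
    then show "rule_Y n B i = rule_Y n B i'"
      using coeff_eq_imp_lead_eq[of i j i'] by (simp add: rule_R_equiv_iff rule_Y_def)
  qed
  show "\<forall>i\<in>{1..n}. \<forall>i'\<in>{1..n}. \<forall>j\<in>{0..<d}. \<forall>j'\<in>{0..<d}.
      ((i, j), (i', j')) \<in> rule_R n d B \<and> ((i', j'), (i, j)) \<in> rule_R n d B \<longrightarrow> j = j'"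
    using coeff_eqD by (auto simp: rule_R_equiv_iff)
qed (auto simp: rule_R_def)

end

lemma finite_CRs: "finite {(Y, R). is_CR n d k Y R}"
proof (rule finite_subset)
  show "{(Y, R). is_CR n d k Y R} \<subseteq> ({1..n} \<rightarrow>\<^sub>E {0..<k}) \<times> Pow (CR_index n d \<times> CR_index n d)"
    by (auto simp: is_CR_def Let_def)
  show "finite (({1..n} \<rightarrow>\<^sub>E {0..<k}) \<times> Pow (CR_index n d \<times> CR_index n d))"
    by (simp add: CR_index_def finite_PiE)
qed

lemma coeff_set_subset:
  assumes "A \<in> distinct_last_nsubsets n d k" and "\<forall>u\<in>A. \<forall>t\<in>{1..d}. u ! t \<in> H"
  shows "coeff_set n d A \<subseteq> H"
  using assms ith_by_last_nsubsetD(1)[OF assms(1)] by (auto simp: coeff_set_def coeff_def CR_index_def)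

lemma T_prop_P: "T_prop n (omega_times d k) (P n d k)"
  unfolding T_prop_def
proof (intro allI impI)
  fix c :: nat and COL :: "nat list set \<Rightarrow> nat"
  assume COL: "COL ` nsubsets (omega_times d k) n \<subseteq> {1..c}"
  let ?F = "({1..n} \<rightarrow>\<^sub>E {0..<k}) \<times> Pow (CR_index n d \<times> CR_index n d)"
  let ?rule = "\<lambda>B. (rule_Y n B, rule_R n d B)"
  obtain H \<phi> where H: "infinite H"
    and \<phi>: "\<forall>B\<in>distinct_last_nsubsets n d k. coeff_set n d B \<subseteq> H \<longrightarrow> COL B = \<phi> (?rule B)"
  proof (rule Ramsey_signature[of ?F "UNIV :: nat set" ?rule "distinct_last_nsubsets n d k" "coeff_set n d" COL "Suc c"])
    show "finite ?F"
      by (simp add: CR_index_def finite_PiE)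
    show "?rule ` distinct_last_nsubsets n d k \<subseteq> ?F"
    proof (rule image_subsetI)
      fix B assume "B \<in> distinct_last_nsubsets n d k"
      then show "?rule B \<in> ?F"
        by (intro SigmaI rule_Y_in_PiE PowI) (auto simp: rule_R_def)
    qed
    show "\<forall>B\<in>distinct_last_nsubsets n d k. finite (coeff_set n d B)"
      by (simp add: coeff_set_def CR_index_def)
    show "inj_on (\<lambda>B. (?rule B, coeff_set n d B)) (distinct_last_nsubsets n d k)"
      by (rule inj_onI) (simp add: eq_if_same_rule_and_coeff_set)
    show "\<forall>B\<in>distinct_last_nsubsets n d k. \<forall>B'\<in>distinct_last_nsubsets n d k.
        ?rule B = ?rule B' \<longrightarrow> card (coeff_set n d B) = card (coeff_set n d B')"
      using card_coeff_set_eq by blast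
    show "\<forall>B\<in>distinct_last_nsubsets n d k. COL B < Suc c"
      using COL by (fastforce simp: distinct_last_nsubsets_def)
  qed auto
  define S' where "S' = prefix_emb H ` omega_times d k"
  have S': "S' \<subseteq> omega_times d k" "prefix_coded d S'"
    using prefix_emb_in_omega_times prefix_coded_prefix_emb[OF H] by (auto simp: S'_def)
  have rule_B: "COL B = \<phi> (?rule B) \<and> ?rule B \<in> {(Y, R). is_CR n d k Y R}"
    if B: "B \<in> nsubsets S' n" for B
  proof -
    have sep: "B \<in> distinct_last_nsubsets n d k"
      using S' B by (rule distinct_last_nsubsets_if_prefix_coded)
    have "\<forall>u\<in>B. \<forall>t\<in>{1..d}. u ! t \<in> H"
    proof (intro ballI)
      fix u t assume "u \<in> B" "t \<in> {1..d}"
      then obtain x where "x \<in> omega_times d k" "u = prefix_emb H x"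
        using B by (auto simp: S'_def nsubsets_def)
      with \<open>t \<in> {1..d}\<close> show "u ! t \<in> H"
        using prefix_emb_nth_in[OF H, of t x] by (simp add: omega_times_iff)
    qed
    with sep have "coeff_set n d B \<subseteq> H"
      by (rule coeff_set_subset)
    with sep \<phi> have "COL B = \<phi> (?rule B)"
      by blast
    with is_CR_rule[OF S' B] show ?thesis
      by simp
  qed
  have "COL ` nsubsets S' n \<subseteq> \<phi> ` {(Y, R). is_CR n d k Y R}"
  proof (rule image_subsetI)
    fix B assume "B \<in> nsubsets S' n"
    with rule_B show "COL B \<in> \<phi> ` {(Y, R). is_CR n d k Y R}"
      by (metis image_eqI)
  qed
  then have "card (COL ` nsubsets S' n) \<le> card (\<phi> ` {(Y, R). is_CR n d k Y R})"
    using finite_CRs by (intro card_mono) simp_all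
  also have "\<dots> \<le> P n d k"
    unfolding P_def by (rule card_image_le[OF finite_CRs])
  finally have "card (COL ` nsubsets S' n) \<le> P n d k" .
  moreover have "order_equiv S' (omega_times d k)"
    unfolding S'_def using H by (rule order_equiv_prefix_emb)
  ultimately show "\<exists>S'\<subseteq>omega_times d k. order_equiv S' (omega_times d k) \<and> card (COL ` nsubsets S' n) \<le> P n d k"
    using S'(1) by blast
qed

lemma T_le_if_T_prop: "T_prop n S t \<Longrightarrow> T n S \<le> enat t"
  by (auto simp: T_def intro: Least_le)

theorem theorem9p3:
  fixes n d k :: nat
  shows "T n (omega_times d k) \<le> enat (P n d k)"
  using T_prop_P by (rule T_le_if_T_prop)

end
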